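(* Let $(H,L_H)$ be a right-resolving labeled graph presenting $Y=L_H(X_H)$. Let $\gamma$ be a finite path in $H$ whose start vertex $s_H(\gamma)$ is regular. Then the terminal vertex $t_H(\gamma)$ is regular.
   Context: A labeled graph $(H,L_H)$: finite directed graph (vertices $V_H$, edges $E_H$, source/terminal maps $s_H,t_H$) without sinks or sources, labeling $L_H:E_H\to A$, edge shift $X_H$; $L_H$ acts coordinatewise on paths. $X_H[0,\infty)$ denotes right-infinite paths and $X_H(-\infty,-1]$ left-infinite paths; $s_H$ of a (finite or right-infinite) path is the source of its first edge, $t_H$ of a (finite or left-infinite) path is the terminal vertex of its last edge; $Y[0,\infty)=\{y_{[0,\infty)}:y\in Y\}$. Right-resolving: distinct edges with the same source have distinct labels. $f_H(v)=\{L_H(x):x\in X_H[0,\infty), s_H(x)=v\}$; for $y\in Y$, $F(y)=\{w\in Y[0,\infty): y_{(-\infty,-1]}w\in Y\}$. A vertex $v$ is regular if there is $z\in X_H$ with $t_H(z_{(-\infty,-1]})=v$ and $f_H(v)=F(L_H(z))$. *)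

theory Defs
  imports Main
begin

definition labeled_graph :: "'v set \<Rightarrow> 'e set \<Rightarrow> ('e \<Rightarrow> 'v) \<Rightarrow> ('e \<Rightarrow> 'v) \<Rightarrow> bool" where
  "labeled_graph V E s t \<longleftrightarrow> finite V \<and> finite E \<and>
     (\<forall>e\<in>E. s e \<in> V \<and> t e \<in> V) \<and>
     (\<forall>v\<in>V. \<exists>e\<in>E. s e = v) \<and>     \<comment> \<open>no sinks\<close>
     (\<forall>v\<in>V. \<exists>e\<in>E. t e = v)"

definition right_resolving :: "'e set \<Rightarrow> ('e \<Rightarrow> 'v) \<Rightarrow> ('e \<Rightarrow> 'a) \<Rightarrow> bool" where
  "right_resolving E s L \<longleftrightarrow>
     (\<forall>e1\<in>E. \<forall>e2\<in>E. e1 \<noteq> e2 \<and> s e1 = s e2 \<longrightarrow> L e1 \<noteq> L e2)"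

definition edge_shift :: "'e set \<Rightarrow> ('e \<Rightarrow> 'v) \<Rightarrow> ('e \<Rightarrow> 'v) \<Rightarrow> (int \<Rightarrow> 'e) set" where
  "edge_shift E s t = {x. (\<forall>i. x i \<in> E) \<and> (\<forall>i. t (x i) = s (x (i + 1)))}"

definition right_paths :: "'e set \<Rightarrow> ('e \<Rightarrow> 'v) \<Rightarrow> ('e \<Rightarrow> 'v) \<Rightarrow> (nat \<Rightarrow> 'e) set" where
  "right_paths E s t = {x. (\<forall>n. x n \<in> E) \<and> (\<forall>n. t (x n) = s (x (Suc n)))}"

definition presented_shift :: "'e set \<Rightarrow> ('e \<Rightarrow> 'v) \<Rightarrow> ('e \<Rightarrow> 'v) \<Rightarrow> ('e \<Rightarrow> 'a) \<Rightarrow> (int \<Rightarrow> 'a) set" where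
  "presented_shift E s t L = (\<lambda>x. L \<circ> x) ` edge_shift E s t"

definition right_part :: "(int \<Rightarrow> 'a) set \<Rightarrow> (nat \<Rightarrow> 'a) set" where
  "right_part Y = (\<lambda>y. \<lambda>n. y (int n)) ` Y"

definition glue :: "(int \<Rightarrow> 'a) \<Rightarrow> (nat \<Rightarrow> 'a) \<Rightarrow> (int \<Rightarrow> 'a)" where
  "glue y w = (\<lambda>i. if i < 0 then y i else w (nat i))"

definition follower_H :: "'e set \<Rightarrow> ('e \<Rightarrow> 'v) \<Rightarrow> ('e \<Rightarrow> 'v) \<Rightarrow> ('e \<Rightarrow> 'a) \<Rightarrow> 'v \<Rightarrow> (nat \<Rightarrow> 'a) set" where
  "follower_H E s t L v = {L \<circ> x | x. x \<in> right_paths E s t \<and> s (x 0) = v}"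

definition future :: "(int \<Rightarrow> 'a) set \<Rightarrow> (int \<Rightarrow> 'a) \<Rightarrow> (nat \<Rightarrow> 'a) set" where
  "future Y y = {w \<in> right_part Y. glue y w \<in> Y}"

text \<open>Regular vertex: there is z in X_H with t_H(z_{(-\<infinity>,-1]}) = t_H(z_{-1}) = v
  and f_H(v) = F(L_H(z)).\<close>
definition regular_vertex :: "'e set \<Rightarrow> ('e \<Rightarrow> 'v) \<Rightarrow> ('e \<Rightarrow> 'v) \<Rightarrow> ('e \<Rightarrow> 'a) \<Rightarrow> 'v \<Rightarrow> bool" where
  "regular_vertex E s t L v \<longleftrightarrow>
     (\<exists>z\<in>edge_shift E s t. t (z (-1)) = v \<and>
        follower_H E s t L v = future (presented_shift E s t L) (L \<circ> z))"

definition finite_path :: "'e set \<Rightarrow> ('e \<Rightarrow> 'v) \<Rightarrow> ('e \<Rightarrow> 'v) \<Rightarrow> 'e list \<Rightarrow> bool" where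
  "finite_path E s t p \<longleftrightarrow> p \<noteq> [] \<and> set p \<subseteq> E \<and>
     (\<forall>i. Suc i < length p \<longrightarrow> t (p ! i) = s (p ! Suc i))"

end

theory Submission
  imports Defs
begin

text \<open>Regularity propagates along a single edge e, and then along the path by induction.
  Given a witness z for s(e), continue z by e and then by any right-infinite path from t(e).
  Since H is right-resolving, the words w readable from t(e) are exactly those for which
  L(e) w is readable from s(e); since Y is shift-invariant, the words w that can follow the
  new left-infinite part are exactly those for which L(e) w can follow the left part of z.
  So the two follower sets of t(e) agree because those of s(e) do.\<close>

lemma edge_shift_shift:
  assumes "x \<in> edge_shift E s t"
  shows "(\<lambda>i. x (i + k)) \<in> edge_shift E s t"
  using assms unfolding edge_shift_def by (auto simp: algebra_simps)

lemma shift_mem_presented_shift_iff: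
  "(\<lambda>i. y (i + k)) \<in> presented_shift E s t L \<longleftrightarrow> y \<in> presented_shift E s t L"
proof -
  have shift_mem: "(\<lambda>i. y (i + k)) \<in> presented_shift E s t L"
    if "y \<in> presented_shift E s t L" for y :: "int \<Rightarrow> _" and k
  proof -
    from that obtain x where "x \<in> edge_shift E s t" "y = L \<circ> x"
      unfolding presented_shift_def by auto
    then show ?thesis
      using edge_shift_shift unfolding presented_shift_def by (fastforce simp: comp_def)
  qed
  show ?thesis
    using shift_mem[of y k] shift_mem[of "\<lambda>i. y (i + k)" "- k"] by auto
qed

lemma glue_mem_edge_shift:
  assumes "z \<in> edge_shift E s t" "r \<in> right_paths E s t" "t (z (-1)) = s (r 0)"
  shows "glue z r \<in> edge_shift E s t"
proof -
  have "t (glue z r i) = s (glue z r (i + 1))" for i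
  proof -
    consider "i < -1" | "i = -1" | "i \<ge> 0" by linarith
    then show ?thesis
    proof cases
      case 3
      then have "nat (i + 1) = Suc (nat i)" by auto
      with 3 show ?thesis using assms(2) by (simp add: glue_def right_paths_def)
    qed (use assms in \<open>auto simp: glue_def edge_shift_def\<close>)
  qed
  moreover have "glue z r i \<in> E" for i
    using assms(1,2) by (simp add: glue_def edge_shift_def right_paths_def)
  ultimately show ?thesis unfolding edge_shift_def by blast
qed

lemma glue_shift_glue_case_nat:
  "glue (\<lambda>i. glue y (case_nat a u) (i + 1)) w = (\<lambda>i. glue y (case_nat a w) (i + 1))"
proof
  fix i :: int
  consider "i < -1" | "i = -1" | "i \<ge> 0" by linarith
  then show "glue (\<lambda>i. glue y (case_nat a u) (i + 1)) w i = glue y (case_nat a w) (i + 1)"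
  proof cases
    case 3
    then have "nat (i + 1) = Suc (nat i)" by auto
    with 3 show ?thesis by (simp add: glue_def)
  qed (auto simp: glue_def)
qed

lemma mem_future_iff: "w \<in> future Y y \<longleftrightarrow> glue y w \<in> Y"
proof
  assume "glue y w \<in> Y"
  moreover have "w = (\<lambda>n. glue y w (int n))" by (simp add: glue_def)
  ultimately show "w \<in> future Y y" unfolding future_def right_part_def by blast
qed (simp add: future_def)

lemma future_shift_glue_case_nat:
  "future (presented_shift E s t L) (\<lambda>i. glue y (case_nat a u) (i + 1))
     = {w. case_nat a w \<in> future (presented_shift E s t L) y}"
  by (simp add: mem_future_iff glue_shift_glue_case_nat shift_mem_presented_shift_iff
      set_eq_iff)

lemma right_paths_case_nat:
  assumes "e \<in> E" "x \<in> right_paths E s t" "t e = s (x 0)"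
  shows "case_nat e x \<in> right_paths E s t"
  using assms unfolding right_paths_def by (auto split: nat.split)

lemma right_paths_comp_Suc:
  assumes "x \<in> right_paths E s t"
  shows "x \<circ> Suc \<in> right_paths E s t"
  using assms unfolding right_paths_def by auto

lemma right_path_from_vertex:
  assumes "labeled_graph V E s t" "u \<in> V"
  obtains r where "r \<in> right_paths E s t" "s (r 0) = u"
proof -
  have out_edge: "\<exists>e\<in>E. s e = v" if "v \<in> V" for v
    using assms(1) that unfolding labeled_graph_def by blast
  have target: "t e \<in> V" if "e \<in> E" for e
    using assms(1) that unfolding labeled_graph_def by blast
  have "\<exists>r. \<forall>n. (r n \<in> E \<and> (n = 0 \<longrightarrow> s (r n) = u)) \<and> t (r n) = s (r (Suc n))"
  proof (rule dependent_nat_choice)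
    show "\<exists>e. e \<in> E \<and> (0 = 0 \<longrightarrow> s e = u)" using out_edge[OF assms(2)] by auto
  next
    fix e and n :: nat assume "e \<in> E \<and> (n = 0 \<longrightarrow> s e = u)"
    then show "\<exists>e'. (e' \<in> E \<and> (Suc n = 0 \<longrightarrow> s e' = u)) \<and> t e = s e'"
      using out_edge[OF target] by force
  qed
  then show ?thesis using that unfolding right_paths_def by blast
qed

lemma follower_H_target:
  assumes "right_resolving E s L" "e \<in> E"
  shows "follower_H E s t L (t e) = {w. case_nat (L e) w \<in> follower_H E s t L (s e)}"
proof (intro set_eqI iffI; simp)
  fix w assume "w \<in> follower_H E s t L (t e)"
  then obtain x where x: "x \<in> right_paths E s t" "s (x 0) = t e" "w = L \<circ> x"
    unfolding follower_H_def by blast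
  have "case_nat (L e) w = L \<circ> case_nat e x"
    using x(3) by (auto split: nat.split)
  with right_paths_case_nat[OF assms(2) x(1)] x(2)
  show "case_nat (L e) w \<in> follower_H E s t L (s e)"
    unfolding follower_H_def by force
next
  fix w assume "case_nat (L e) w \<in> follower_H E s t L (s e)"
  then obtain x where x: "x \<in> right_paths E s t" "s (x 0) = s e" "case_nat (L e) w = L \<circ> x"
    unfolding follower_H_def by auto
  have "L (x 0) = L e" using fun_cong[OF x(3), of 0] by simp
  moreover have "x 0 \<in> E" using x(1) unfolding right_paths_def by auto
  ultimately have "x 0 = e"
    using assms x(2) unfolding right_resolving_def by blast
  then have "s ((x \<circ> Suc) 0) = t e" using x(1) unfolding right_paths_def by auto
  moreover have "w = L \<circ> (x \<circ> Suc)"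
  proof
    fix n show "w n = (L \<circ> (x \<circ> Suc)) n" using fun_cong[OF x(3), of "Suc n"] by simp
  qed
  ultimately show "w \<in> follower_H E s t L (t e)"
    using right_paths_comp_Suc[OF x(1)] unfolding follower_H_def by blast
qed

lemma regular_vertex_target:
  assumes G: "labeled_graph V E s t" and "right_resolving E s L" and e: "e \<in> E"
    and "regular_vertex E s t L (s e)"
  shows "regular_vertex E s t L (t e)"
proof -
  let ?Y = "presented_shift E s t L"
  from assms(4) obtain z where z: "z \<in> edge_shift E s t" "t (z (-1)) = s e"
    and follower_future: "follower_H E s t L (s e) = future ?Y (L \<circ> z)"
    unfolding regular_vertex_def by blast
  have "t e \<in> V" using G e unfolding labeled_graph_def by auto
  then obtain r where r: "r \<in> right_paths E s t" "s (r 0) = t e"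
    using right_path_from_vertex[OF G] by blast
  define z' where "z' = (\<lambda>i. glue z (case_nat e r) (i + 1))"
  have "glue z (case_nat e r) \<in> edge_shift E s t"
    using z right_paths_case_nat[OF e r(1)] r(2) by (intro glue_mem_edge_shift) auto
  then have "z' \<in> edge_shift E s t"
    unfolding z'_def by (rule edge_shift_shift)
  moreover have "t (z' (-1)) = t e" by (simp add: z'_def glue_def)
  moreover have "follower_H E s t L (t e) = future ?Y (L \<circ> z')"
  proof -
    have "L \<circ> z' = (\<lambda>i. glue (L \<circ> z) (case_nat (L e) (L \<circ> r)) (i + 1))"
      unfolding z'_def by (auto simp: glue_def split: nat.split)
    then show ?thesis
      by (simp add: follower_H_target[OF assms(2) e] follower_future
          future_shift_glue_case_nat)
  qed
  ultimately show ?thesis unfolding regular_vertex_def by blast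
qed

lemma finite_path_Cons_iff:
  "finite_path E s t (e # p) \<longleftrightarrow>
     e \<in> E \<and> (p = [] \<or> finite_path E s t p \<and> t e = s (hd p))"
  by (cases p) (auto simp: finite_path_def nth_Cons split: nat.split)

theorem lemma2p2:
  fixes V :: "'v set" and E :: "'e set" and s t :: "'e \<Rightarrow> 'v" and L :: "'e \<Rightarrow> 'a"
    and \<gamma> :: "'e list"
  assumes "labeled_graph V E s t"
    and "right_resolving E s L"
    and "finite_path E s t \<gamma>"
    and "regular_vertex E s t L (s (hd \<gamma>))"
  shows "regular_vertex E s t L (t (last \<gamma>))"
  using assms(3,4)
proof (induction \<gamma>)
  case Nil
  then show ?case by (simp add: finite_path_def)
next
  case (Cons e p)
  then have "regular_vertex E s t L (t e)"
    using regular_vertex_target[OF assms(1,2)] by (simp add: finite_path_Cons_iff)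
  with Cons show ?case by (auto simp: finite_path_Cons_iff)
qed

end
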